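(* Let $n\geq 2$ and let $\mathcal R(P_n)=u_1,\ldots,u_k$, so $u_1>_{\mathcal R}\cdots>_{\mathcal R}u_k$. Let $1<i<j\leq k$, and suppose $u_j$ is divisible by some variable belonging to the ideal $(u_1,\ldots,u_{i-1}):(u_i)$. Then either $u_iu_j$ is not a minimal generator of $J(P_n)^2$, or the expression $u_iu_j$ is not the maximal expression of the monomial $u_iu_j$.
   Context: Let $K$ be a field and $S=K[x_1,\ldots,x_n]$. For $m\geq 1$, $P_m$ is the path graph on vertices $x_1,\ldots,x_m$ with edges $\{x_i,x_{i+1}\}$. The cover ideal $J(P_m)$ is generated by the monomials $\prod_{x\in C}x$ with $C$ a minimal vertex cover of $P_m$. For a monomial ideal $I$, $G(I)$ is its set of minimal monomial generators and $F(I^2)=\{uv:u,v\in G(I)\}$. The rooted list $\mathcal R(P_m)$ is defined recursively: $\mathcal R(P_1)$ empty; $\mathcal R(P_2)=x_1,x_2$; $\mathcal R(P_3)=x_2,x_1x_3$; $\mathcal R(P_4)=x_1x_3,x_2x_3,x_2x_4$; for $m\geq5$, if $\mathcal R(P_{m-2})=u_1,\ldots,u_r$ and $\mathcal R(P_{m-3})=v_1,\ldots,v_s$, then $\mathcal R(P_m)=x_{m-1}u_1,\ldots,x_{m-1}u_r,x_mx_{m-2}v_1,\ldots,x_mx_{m-2}v_s$; it lists each element of $G(J(P_m))$ once, and $w_i>_{\mathcal R}w_j$ iff $w_i$ precedes $w_j$. With $\mathcal R(P_m)=u_1,\ldots,u_q$, each $M\in F(J(P_m)^2)$ can be written $u_1^{a_1}\cdots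 u_q^{a_q}$ with $a_i\geq0$, $\sum a_i=2$; the maximal expression of $M$ is the one with lexicographically largest exponent vector $(a_1,\ldots,a_q)$. "The expression $u_iu_j$ is maximal" means the exponent vector $e_i+e_j$ is that of the maximal expression of the monomial $u_iu_j$. *)

theory Defs
  imports Main "HOL-Library.Multiset"
begin

text \<open>Monomials in K[x_1,...,x_n] are represented by their multisets of variable
indices (x_i corresponds to index i); product = multiset sum, divisibility = subset_mset.\<close>

type_synonym monomial = "nat multiset"

definition is_vertex_cover_path :: "nat \<Rightarrow> nat set \<Rightarrow> bool" where
  "is_vertex_cover_path m C \<longleftrightarrow> C \<subseteq> {1..m} \<and> (\<forall>i. 1 \<le> i \<and> i < m \<longrightarrow> i \<in> C \<or> Suc i \<in> C)"

definition is_min_vertex_cover_path :: "nat \<Rightarrow> nat set \<Rightarrow> bool" where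
  "is_min_vertex_cover_path m C \<longleftrightarrow> is_vertex_cover_path m C \<and>
     (\<forall>D. D \<subset> C \<longrightarrow> \<not> is_vertex_cover_path m D)"

definition cover_gens :: "nat \<Rightarrow> monomial set" where
  "cover_gens m = {mset_set C | C. is_min_vertex_cover_path m C}"

definition F2 :: "monomial set \<Rightarrow> monomial set" where
  "F2 G = {u + v | u v. u \<in> G \<and> v \<in> G}"

definition in_mideal :: "monomial set \<Rightarrow> monomial \<Rightarrow> bool" where
  "in_mideal gens w \<longleftrightarrow> (\<exists>g\<in>gens. g \<subseteq># w)"

definition min_gens :: "monomial set \<Rightarrow> monomial set" where
  "min_gens gens = {w. in_mideal gens w \<and> (\<forall>w'. in_mideal gens w' \<and> w' \<subseteq># w \<longrightarrow> w' = w)}"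

fun rooted :: "nat \<Rightarrow> monomial list" where
  "rooted 0 = []"
| "rooted (Suc 0) = []"
| "rooted (Suc (Suc 0)) = [{#1#}, {#2#}]"
| "rooted (Suc (Suc (Suc 0))) = [{#2#}, {#1, 3#}]"
| "rooted (Suc (Suc (Suc (Suc 0)))) = [{#1, 3#}, {#2, 3#}, {#2, 4#}]"
| "rooted (Suc (Suc (Suc (Suc (Suc m))))) =
     map (\<lambda>u. add_mset (m + 4) u) (rooted (m + 3)) @
     map (\<lambda>v. {#m + 5, m + 3#} + v) (rooted (m + 2))"

definition expvec :: "nat \<Rightarrow> nat \<Rightarrow> nat \<Rightarrow> nat list" where
  "expvec k a b = map (\<lambda>l. (if l = a then 1 else 0) + (if l = b then 1 else 0)) [1..<Suc k]"

definition lex_gt :: "nat list \<Rightarrow> nat list \<Rightarrow> bool" where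
  "lex_gt xs ys \<longleftrightarrow> (ys, xs) \<in> lexord {(a, b). a < b}"

definition is_max_expr :: "nat \<Rightarrow> nat \<Rightarrow> nat \<Rightarrow> bool" where
  "is_max_expr n i j \<longleftrightarrow>
     (let u = (\<lambda>l. rooted n ! (l - 1)); k = length (rooted n) in
      \<forall>a b. 1 \<le> a \<and> a \<le> k \<and> 1 \<le> b \<and> b \<le> k \<and> u a + u b = u i + u j \<longrightarrow>
            \<not> lex_gt (expvec k a b) (expvec k i j))"

end

theory Submission
  imports Defs
begin

text \<open>Identify a minimal vertex cover \<open>C\<close> of \<open>P_n\<close> with its monomial and weigh it by
  \<open>\<Sum>x\<in>C. 2^x\<close>. The rooted list \<open>R(P_n)\<close> is exactly \<open>G(J(P_n))\<close> in order of increasing weight, so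
  \<open>u_l\<close> precedes \<open>u_i\<close> iff it is lighter. Let \<open>A, B, C\<close> be the covers of \<open>u_i, u_j, u_l\<close> with
  \<open>l < i\<close>, \<open>C \<subseteq> A \<union> {v}\<close> and \<open>v \<in> B\<close>. As \<open>C\<close> is lighter than the minimal cover \<open>A\<close>, the
  largest vertex of \<open>A - C\<close> must be \<open>v + 1\<close>; hence \<open>v \<notin> A\<close>, \<open>v + 1 \<in> A\<close> and \<open>v + 2 \<in> A\<close>.
  Crossing \<open>A\<close> and \<open>B\<close> over at \<open>v\<close> gives the covers \<open>E = B|[1,v] \<union> A|[v+2,n]\<close> and
  \<open>F = A|[1,v+1] \<union> B|[v+2,n]\<close>: the product \<open>EF\<close> divides \<open>u_i u_j\<close> and \<open>E\<close> is lighter than \<open>A\<close>.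
  Minimal covers inside \<open>E\<close> and \<open>F\<close> are list elements \<open>u_a, u_b\<close> with \<open>a < i\<close> and
  \<open>u_a u_b | u_i u_j\<close>: a proper divisor shows that \<open>u_i u_j\<close> is not a minimal generator of
  \<open>J(P_n)^2\<close>, and equality gives an expression of \<open>u_i u_j\<close> with a lexicographically larger
  exponent vector.\<close>

definition bin_weight :: "nat set \<Rightarrow> nat" where
  "bin_weight C = (\<Sum>x\<in>C. 2 ^ x)"

lemma bin_weight_insert: "finite C \<Longrightarrow> x \<notin> C \<Longrightarrow> bin_weight (insert x C) = 2 ^ x + bin_weight C"
  by (simp add: bin_weight_def)

lemma bin_weight_mono: "finite A \<Longrightarrow> C \<subseteq> A \<Longrightarrow> bin_weight C \<le> bin_weight A"
  unfolding bin_weight_def by (rule sum_mono2) auto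

lemma bin_weight_less_power: "C \<subseteq> {..<m} \<Longrightarrow> bin_weight C < 2 ^ m"
proof -
  assume "C \<subseteq> {..<m}"
  then have "bin_weight C \<le> (\<Sum>x<m. 2 ^ x)"
    unfolding bin_weight_def by (intro sum_mono2) auto
  also have "\<dots> < 2 ^ m"
    using sum_power2[of m] by (simp add: atLeast0LessThan)
  finally show ?thesis .
qed

lemma bin_weight_split: "finite A \<Longrightarrow> bin_weight A = bin_weight (A \<inter> C) + bin_weight (A - C)"
  unfolding bin_weight_def by (metis Diff_disjoint Int_Diff_Un Int_Diff_disjoint finite_Diff finite_Int sum.union_disjoint)

lemma bin_weight_less_if_max_diff:
  assumes "finite A" "finite C" "m \<in> A - C" "\<forall>x\<in>C - A. x < m"
  shows "bin_weight C < bin_weight A"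
proof -
  have "bin_weight (C - A) < 2 ^ m"
    using assms(4) by (intro bin_weight_less_power) auto
  also have "2 ^ m \<le> bin_weight (A - C)"
    unfolding bin_weight_def using assms(1,3) by (intro member_le_sum) auto
  finally show ?thesis
    using bin_weight_split[OF assms(1), of C] bin_weight_split[OF assms(2), of A]
    by (simp add: Int_commute)
qed

lemma bin_weight_less_iff:
  assumes "finite A" "finite C"
  shows "bin_weight C < bin_weight A \<longleftrightarrow> (\<exists>m\<in>A - C. \<forall>x\<in>C - A. x < m)"
proof
  assume less: "bin_weight C < bin_weight A"
  then have "A - C \<noteq> {}"
    using bin_weight_mono[OF assms(2), of A] by auto
  define m where "m = Max (A - C)"
  have m: "m \<in> A - C" "\<forall>y\<in>A - C. y \<le> m"
    unfolding m_def using assms(1) \<open>A - C \<noteq> {}\<close> by (metis Max_in finite_Diff, simp)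
  have "\<forall>x\<in>C - A. x < m"
  proof (rule ccontr)
    assume "\<not> (\<forall>x\<in>C - A. x < m)"
    then obtain x where x: "x \<in> C - A" "m < x"
      using m(1) by (metis DiffD1 DiffD2 DiffI linorder_neqE_nat)
    then have "m < Max (C - A)"
      using assms(2) by (meson Max_ge finite_Diff order.strict_trans2)
    moreover have "Max (C - A) \<in> C - A"
      using assms(2) x(1) by (metis Max_in empty_iff finite_Diff)
    ultimately have "bin_weight A < bin_weight C"
      using m(2) assms by (intro bin_weight_less_if_max_diff) (auto intro: le_less_trans)
    with less show False by simp
  qed
  with m(1) show "\<exists>m\<in>A - C. \<forall>x\<in>C - A. x < m" by blast
qed (use bin_weight_less_if_max_diff assms in blast)

lemma is_vertex_cover_path_subset: "is_vertex_cover_path n C \<Longrightarrow> C \<subseteq> {1..n}"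
  by (simp add: is_vertex_cover_path_def)

lemma is_vertex_cover_path_edge:
  "is_vertex_cover_path n C \<Longrightarrow> 1 \<le> i \<Longrightarrow> i < n \<Longrightarrow> i \<in> C \<or> Suc i \<in> C"
  by (simp add: is_vertex_cover_path_def)

lemma is_vertex_cover_path_finite: "is_vertex_cover_path n C \<Longrightarrow> finite C"
  using finite_subset[OF is_vertex_cover_path_subset] by blast

lemma is_min_vertex_cover_path_iff:
  "is_min_vertex_cover_path n C \<longleftrightarrow> is_vertex_cover_path n C \<and>
     (\<forall>x\<in>C. (2 \<le> x \<and> x - 1 \<notin> C) \<or> (x + 1 \<le> n \<and> x + 1 \<notin> C))"
proof (intro iffI conjI ballI)
  assume min: "is_min_vertex_cover_path n C"
  then show cov: "is_vertex_cover_path n C"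
    by (simp add: is_min_vertex_cover_path_def)
  fix x assume "x \<in> C"
  then have "\<not> is_vertex_cover_path n (C - {x})"
    using min unfolding is_min_vertex_cover_path_def by blast
  then obtain i where "1 \<le> i" "i < n" "i \<notin> C - {x}" "Suc i \<notin> C - {x}"
    using cov unfolding is_vertex_cover_path_def by auto
  then show "(2 \<le> x \<and> x - 1 \<notin> C) \<or> (x + 1 \<le> n \<and> x + 1 \<notin> C)"
    using is_vertex_cover_path_edge[OF cov, of i] by (cases "i = x") auto
next
  assume H: "is_vertex_cover_path n C \<and>
    (\<forall>x\<in>C. (2 \<le> x \<and> x - 1 \<notin> C) \<or> (x + 1 \<le> n \<and> x + 1 \<notin> C))"
  show "is_min_vertex_cover_path n C"
    unfolding is_min_vertex_cover_path_def
  proof (intro conjI allI impI notI)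
    fix D assume D: "D \<subset> C" "is_vertex_cover_path n D"
    then obtain x where x: "x \<in> C" "x \<notin> D"
      by blast
    then have "1 \<le> x" "x \<le> n"
      using H is_vertex_cover_path_subset by fastforce+
    moreover have "(2 \<le> x \<and> x - 1 \<notin> C) \<or> (x + 1 \<le> n \<and> x + 1 \<notin> C)"
      using H x(1) by blast
    ultimately show False
    proof (elim disjE conjE)
      assume "2 \<le> x" "x - 1 \<notin> C" "x \<le> n"
      then have "x - 1 \<in> D \<or> Suc (x - 1) \<in> D"
        by (intro is_vertex_cover_path_edge[OF D(2)]) auto
      then show False
        using D(1) x \<open>2 \<le> x\<close> \<open>x - 1 \<notin> C\<close> by (auto simp: Suc_diff_le)
    next
      assume "1 \<le> x" "x + 1 \<le> n" "x + 1 \<notin> C"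
      then have "x \<in> D \<or> Suc x \<in> D"
        by (intro is_vertex_cover_path_edge[OF D(2)]) auto
      then show False
        using D(1) x \<open>x + 1 \<notin> C\<close> by auto
    qed
  qed (use H in blast)
qed

lemma is_min_vertex_cover_path_imp_cover:
  "is_min_vertex_cover_path n C \<Longrightarrow> is_vertex_cover_path n C"
  by (simp add: is_min_vertex_cover_path_def)

lemma exists_min_vertex_cover_path_subset:
  "is_vertex_cover_path n C \<Longrightarrow> \<exists>D\<subseteq>C. is_min_vertex_cover_path n D"
proof (induction "card C" arbitrary: C rule: less_induct)
  case less
  show ?case
  proof (cases "is_min_vertex_cover_path n C")
    case False
    then obtain D where D: "D \<subset> C" "is_vertex_cover_path n D"
      using less.prems unfolding is_min_vertex_cover_path_def by blast
    then have "card D < card C"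
      using is_vertex_cover_path_finite[OF less.prems] by (simp add: psubset_card_mono)
    then show ?thesis
      using less.hyps D by (meson order.trans psubset_imp_subset)
  qed blast
qed

lemma is_min_vertex_cover_path_restrict:
  assumes "is_min_vertex_cover_path N C" "m < N" "Suc m \<in> C"
  shows "is_min_vertex_cover_path m {x\<in>C. x \<le> m}"
  using assms unfolding is_min_vertex_cover_path_iff is_vertex_cover_path_def
  by (auto simp: subset_iff) (metis le_antisym not_less_eq_eq)+

lemma is_min_vertex_cover_path_Suc_Suc_iff:
  assumes "1 \<le> n"
  shows "is_min_vertex_cover_path (Suc (Suc n)) C \<longleftrightarrow>
    (\<exists>C0. is_min_vertex_cover_path n C0 \<and> C = insert (Suc n) C0) \<or>
    (\<exists>C0. is_min_vertex_cover_path (n - 1) C0 \<and> C = insert (Suc (Suc n)) (insert n C0))"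
    (is "?min C \<longleftrightarrow> ?X \<or> ?Y")
proof
  assume min: "?min C"
  note C = min[unfolded is_min_vertex_cover_path_iff is_vertex_cover_path_def]
  show "?X \<or> ?Y"
  proof (cases "Suc n \<in> C")
    case True
    then have "Suc (Suc n) \<notin> C"
      using C by fastforce
    with True have "C = insert (Suc n) {x\<in>C. x \<le> n}"
      using C by (auto simp: subset_iff le_Suc_eq)
    then show ?thesis
      using is_min_vertex_cover_path_restrict[OF min _ True] by auto
  next
    case False
    then have "n \<in> C" "Suc (Suc n) \<in> C"
      using C assms by auto
    moreover have "C = insert (Suc (Suc n)) (insert n {x\<in>C. x \<le> n - 1})"
      using C False calculation by (auto simp: subset_iff le_Suc_eq)
    ultimately show ?thesis
      using is_min_vertex_cover_path_restrict[OF min, of "n - 1"] assms by auto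
  qed
next
  assume "?X \<or> ?Y"
  then show "?min C"
  proof (elim disjE exE conjE)
    fix C0 assume "is_min_vertex_cover_path n C0" "C = insert (Suc n) C0"
    then show "?min C"
      unfolding is_min_vertex_cover_path_iff is_vertex_cover_path_def
      by (auto simp: subset_iff)
  next
    fix C0 assume "is_min_vertex_cover_path (n - 1) C0" "C = insert (Suc (Suc n)) (insert n C0)"
    then show "?min C"
      unfolding is_min_vertex_cover_path_iff is_vertex_cover_path_def
      using assms by (auto simp: subset_iff)
  qed
qed

lemma is_min_vertex_cover_path_le_1:
  assumes "n \<le> 1"
  shows "is_min_vertex_cover_path n C \<longleftrightarrow> C = {}"
proof
  assume min: "is_min_vertex_cover_path n C"
  show "C = {}"
  proof (rule equals0I)
    fix x assume "x \<in> C"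
    then have "x = 1" "n = 1"
      using min assms unfolding is_min_vertex_cover_path_def is_vertex_cover_path_def by auto
    moreover have "(2 \<le> x \<and> x - 1 \<notin> C) \<or> (x + 1 \<le> n \<and> x + 1 \<notin> C)"
      using min \<open>x \<in> C\<close> unfolding is_min_vertex_cover_path_iff by blast
    ultimately show False
      by simp
  qed
next
  assume "C = {}"
  then show "is_min_vertex_cover_path n C"
    using assms unfolding is_min_vertex_cover_path_iff is_vertex_cover_path_def by simp
qed

lemma is_min_vertex_cover_path_2: "is_min_vertex_cover_path 2 C \<longleftrightarrow> C = {1} \<or> C = {2}"
proof -
  have "1 \<le> i \<and> i < 2 \<longleftrightarrow> i = (1::nat)" for i
    by auto
  then have "(\<forall>i. 1 \<le> i \<and> i < 2 \<longrightarrow> i \<in> C \<or> Suc i \<in> C) \<longleftrightarrow> 1 \<in> C \<or> 2 \<in> C"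
    by (simp add: numeral_2_eq_2)
  moreover have "{1..2::nat} = {1, 2}"
    by auto
  ultimately have cover: "is_vertex_cover_path 2 C \<longleftrightarrow> C \<subseteq> {1, 2} \<and> (1 \<in> C \<or> 2 \<in> C)"
    unfolding is_vertex_cover_path_def by presburger
  show ?thesis
  proof
    assume "is_min_vertex_cover_path 2 C"
    then have "C \<subseteq> {1, 2}" "1 \<in> C \<or> 2 \<in> C" "1 \<in> C \<longrightarrow> 2 \<notin> C"
      unfolding is_min_vertex_cover_path_iff cover by auto
    then show "C = {1} \<or> C = {2}"
      by blast
  qed (auto simp: is_min_vertex_cover_path_iff cover)
qed

lemma cover_gens_eq_image: "cover_gens n = mset_set ` {C. is_min_vertex_cover_path n C}"
  unfolding cover_gens_def by blast

lemma cover_gens_Suc_Suc: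
  assumes "1 \<le> n"
  shows "cover_gens (Suc (Suc n)) =
    add_mset (Suc n) ` cover_gens n \<union> (+) {#Suc (Suc n), n#} ` cover_gens (n - 1)"
proof -
  let ?M = "\<lambda>k. {C. is_min_vertex_cover_path k C}"
  have bounded: "finite C \<and> (\<forall>x\<in>C. x \<le> k)" if "C \<in> ?M k" for C k
    using that is_min_vertex_cover_path_imp_cover is_vertex_cover_path_subset
      is_vertex_cover_path_finite by fastforce
  have "?M (Suc (Suc n)) =
      insert (Suc n) ` ?M n \<union> (\<lambda>C. insert (Suc (Suc n)) (insert n C)) ` ?M (n - 1)"
    using is_min_vertex_cover_path_Suc_Suc_iff[OF assms] by blast
  moreover have "mset_set (insert (Suc n) C) = add_mset (Suc n) (mset_set C)" if "C \<in> ?M n" for C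
  proof -
    have "finite C" "Suc n \<notin> C"
      using bounded[OF that] by auto
    then show ?thesis
      by simp
  qed
  then have "mset_set ` insert (Suc n) ` ?M n = add_mset (Suc n) ` mset_set ` ?M n"
    unfolding image_image by (rule image_cong[OF refl])
  moreover have "mset_set (insert (Suc (Suc n)) (insert n C)) = {#Suc (Suc n), n#} + mset_set C"
    if "C \<in> ?M (n - 1)" for C
  proof -
    have "finite C" "n \<notin> C" "Suc (Suc n) \<notin> C"
      using bounded[OF that] assms by auto
    then show ?thesis
      by simp
  qed
  then have "mset_set ` (\<lambda>C. insert (Suc (Suc n)) (insert n C)) ` ?M (n - 1) =
      (+) {#Suc (Suc n), n#} ` mset_set ` ?M (n - 1)"
    unfolding image_image by (rule image_cong[OF refl])
  ultimately show ?thesis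
    unfolding cover_gens_eq_image by (simp add: image_Un)
qed

lemma cover_gens_le_1: "n \<le> 1 \<Longrightarrow> cover_gens n = {{#}}"
proof -
  assume "n \<le> 1"
  then have "{C. is_min_vertex_cover_path n C} = {{}}"
    using is_min_vertex_cover_path_le_1 by blast
  then show ?thesis
    unfolding cover_gens_eq_image by simp
qed

lemma cover_gens_2: "cover_gens 2 = {{#1#}, {#2#}}"
proof -
  have "{C. is_min_vertex_cover_path 2 C} = {{1}, {2}}"
    unfolding is_min_vertex_cover_path_2 by blast
  then show ?thesis
    unfolding cover_gens_eq_image by simp
qed

lemma set_rooted: "2 \<le> n \<Longrightarrow> set (rooted n) = cover_gens n"
proof (induction n rule: rooted.induct)
  case 3
  show ?case
    using cover_gens_2 by (simp add: numeral_2_eq_2)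
next
  case 4
  show ?case
    using cover_gens_Suc_Suc[of 1]
    by (simp add: cover_gens_le_1 eval_nat_numeral add_mset_commute insert_commute)
next
  case 5
  have "cover_gens 4 = {{#4, 2#}, {#3, 1#}, {#3, 2#}}"
    using cover_gens_Suc_Suc[of 2] by (simp add: cover_gens_le_1 cover_gens_2)
  then show ?case
    by (simp add: eval_nat_numeral add_mset_commute insert_commute)
next
  case (6 m)
  have "set (rooted (Suc (Suc (Suc (Suc (Suc m)))))) =
      add_mset (m + 4) ` set (rooted (m + 3)) \<union> (+) {#m + 5, m + 3#} ` set (rooted (m + 2))"
    by simp
  also have "\<dots> = cover_gens (Suc (Suc (m + 3)))"
    using 6 cover_gens_Suc_Suc[of "m + 3"] by (simp add: add.commute)
  finally show ?case
    by (simp add: eval_nat_numeral)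
qed simp_all

lemma set_mset_cover_gens: "u \<in> cover_gens n \<Longrightarrow> set_mset u \<subseteq> {1..n}"
  unfolding cover_gens_def
  using is_min_vertex_cover_path_imp_cover is_vertex_cover_path_subset is_vertex_cover_path_finite
  by fastforce

lemma set_rooted_subset: "set (rooted n) \<subseteq> cover_gens n"
proof (cases "2 \<le> n")
  case False
  then have "n = 0 \<or> n = 1"
    by auto
  then show ?thesis
    by auto
qed (simp add: set_rooted)

lemma sorted_bin_weight_rooted: "sorted_wrt (<) (map (\<lambda>u. bin_weight (set_mset u)) (rooted n))"
proof (induction n rule: rooted.induct)
  case (6 m)
  let ?w = "\<lambda>u. bin_weight (set_mset u)"
  have bound: "set_mset u \<subseteq> {1..k}" if "u \<in> set (rooted k)" for u k
    using that set_rooted_subset set_mset_cover_gens by blast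
  have low: "bin_weight (insert (m + 4) (set_mset u)) = 2 ^ (m + 4) + ?w u" "?w u < 2 ^ (m + 4)"
    if "u \<in> set (rooted (m + 3))" for u
  proof -
    have "m + 4 \<notin> set_mset u" "set_mset u \<subseteq> {..<m + 4}"
      using bound[OF that] by auto
    then show "bin_weight (insert (m + 4) (set_mset u)) = 2 ^ (m + 4) + ?w u" "?w u < 2 ^ (m + 4)"
      by (simp_all add: bin_weight_insert bin_weight_less_power)
  qed
  have high:
    "bin_weight (insert (m + 5) (insert (m + 3) (set_mset u))) = 2 ^ (m + 5) + 2 ^ (m + 3) + ?w u"
    if "u \<in> set (rooted (m + 2))" for u
  proof -
    have "m + 3 \<notin> set_mset u" "m + 5 \<notin> set_mset u"
      using bound[OF that] by auto
    then show ?thesis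
      by (simp add: bin_weight_insert)
  qed
  have "sorted_wrt (<) (map ?w (map (add_mset (m + 4)) (rooted (m + 3))))"
    using "6.IH"(1) unfolding map_map sorted_wrt_map
    by (rule sorted_wrt_mono_rel[rotated]) (simp add: low)
  moreover have "sorted_wrt (<) (map ?w (map ((+) {#m + 5, m + 3#}) (rooted (m + 2))))"
    using "6.IH"(2) unfolding map_map sorted_wrt_map
    by (rule sorted_wrt_mono_rel[rotated]) (simp add: high)
  moreover have "?w (add_mset (m + 4) u) < ?w ({#m + 5, m + 3#} + v)"
    if "u \<in> set (rooted (m + 3))" "v \<in> set (rooted (m + 2))" for u v
  proof -
    have "(2::nat) ^ (m + 5) = 2 ^ (m + 4) + 2 ^ (m + 4)"
      by (simp add: power_add)
    then show ?thesis
      using low[OF that(1)] high[OF that(2)] by simp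
  qed
  ultimately show ?case
    by (auto simp: sorted_wrt_append)
qed (simp_all add: bin_weight_def)

lemma strict_sorted_nth_less_iff:
  fixes xs :: "'a::linorder list"
  assumes "sorted_wrt (<) xs" "p < length xs" "q < length xs"
  shows "xs ! q < xs ! p \<longleftrightarrow> q < p"
  using sorted_wrt_nth_less[OF assms(1)] assms(2,3)
  by (metis linorder_neqE_nat order.asym order.irrefl)

lemma nth_rooted_bin_weight_less_iff:
  assumes "p < length (rooted n)" "q < length (rooted n)"
  shows "bin_weight (set_mset (rooted n ! q)) < bin_weight (set_mset (rooted n ! p)) \<longleftrightarrow> q < p"
  using strict_sorted_nth_less_iff[OF sorted_bin_weight_rooted] assms by fastforce

lemma mset_set_add_subseteq:
  assumes "finite A" "finite B" "E \<union> F \<subseteq> A \<union> B" "E \<inter> F \<subseteq> A \<inter> B"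
  shows "mset_set E + mset_set F \<subseteq># mset_set A + mset_set B"
proof -
  have "finite E" "finite F"
    using assms(1-3) by (meson finite_Un finite_subset le_sup_iff)+
  then show ?thesis
    using assms unfolding subseteq_mset_def by (auto simp: count_mset_set')
qed

lemma lighter_vertex_cover_path_in_insert:
  assumes A: "is_min_vertex_cover_path n A" and C: "is_vertex_cover_path n C"
    and CA: "C \<subseteq> insert v A" and less: "bin_weight C < bin_weight A"
  shows "v \<in> C - A" "Suc v \<in> A - C" "Suc (Suc v) \<le> n \<Longrightarrow> Suc (Suc v) \<in> A"
proof -
  have A': "is_vertex_cover_path n A"
    using A by (rule is_min_vertex_cover_path_imp_cover)
  have fin: "finite A" "finite C"
    using A' C by (simp_all add: is_vertex_cover_path_finite)
  show v: "v \<in> C - A"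
  proof (rule ccontr)
    assume "v \<notin> C - A"
    then have "C \<subset> A"
      using CA less by auto
    then show False
      using A C unfolding is_min_vertex_cover_path_def by blast
  qed
  obtain m where m: "m \<in> A - C" "\<forall>x\<in>C - A. x < m"
    using less bin_weight_less_iff[OF fin] by blast
  have "1 \<le> m" "m \<le> n"
    using m(1) is_vertex_cover_path_subset[OF A'] by auto
  txt \<open>By minimality \<open>m\<close> has a neighbour outside \<open>A\<close>; as \<open>m \<notin> C\<close>, that neighbour lies in
    \<open>C - A \<subseteq> {v}\<close>, and it cannot be \<open>m + 1\<close>, which exceeds \<open>m\<close>.\<close>
  have "(2 \<le> m \<and> m - 1 \<notin> A) \<or> (m + 1 \<le> n \<and> m + 1 \<notin> A)"
    using A m(1) unfolding is_min_vertex_cover_path_iff by blast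
  then have "m = Suc v"
  proof (elim disjE conjE)
    assume "2 \<le> m" "m - 1 \<notin> A"
    then have "m - 1 \<in> C"
      using is_vertex_cover_path_edge[OF C, of "m - 1"] m(1) \<open>m \<le> n\<close> by (auto simp: Suc_diff_le)
    then show "m = Suc v"
      using CA \<open>m - 1 \<notin> A\<close> \<open>2 \<le> m\<close> by auto
  next
    assume "m + 1 \<le> n" "m + 1 \<notin> A"
    then have "m + 1 \<in> C"
      using is_vertex_cover_path_edge[OF C, of m] m(1) \<open>1 \<le> m\<close> by auto
    then have "m + 1 < m"
      using m(2) \<open>m + 1 \<notin> A\<close> by blast
    then show "m = Suc v"
      by simp
  qed
  then show Suc_v: "Suc v \<in> A - C"
    using m(1) by simp
  assume "Suc (Suc v) \<le> n"
  then have "Suc (Suc v) \<in> C"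
    using is_vertex_cover_path_edge[OF C, of "Suc v"] Suc_v by auto
  then show "Suc (Suc v) \<in> A"
    using CA by auto
qed

lemma vertex_cover_path_swap:
  assumes A: "is_vertex_cover_path n A" and B: "is_vertex_cover_path n B"
    and v: "v \<in> B - A" "Suc v \<in> A" "Suc (Suc v) \<le> n \<Longrightarrow> Suc (Suc v) \<in> A"
  shows "\<exists>E F. is_vertex_cover_path n E \<and> is_vertex_cover_path n F \<and> bin_weight E < bin_weight A \<and>
    mset_set E + mset_set F \<subseteq># mset_set A + mset_set B"
proof (intro exI conjI)
  let ?E = "{x\<in>B. x \<le> v} \<union> {x\<in>A. Suc v < x}"
  let ?F = "{x\<in>A. x \<le> Suc v} \<union> {x\<in>B. Suc v < x}"
  have edge: "i \<in> A \<or> Suc i \<in> A" "i \<in> B \<or> Suc i \<in> B" if "1 \<le> i" "i < n" for i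
    using that A B by (simp_all add: is_vertex_cover_path_edge)
  have sub: "A \<subseteq> {1..n}" "B \<subseteq> {1..n}"
    using A B is_vertex_cover_path_subset by blast+
  show "is_vertex_cover_path n ?E"
    unfolding is_vertex_cover_path_def
  proof (intro conjI allI impI)
    fix i assume i: "1 \<le> i \<and> i < n"
    consider "Suc i \<le> v" | "i = v" | "i = Suc v" | "Suc v < i"
      by linarith
    then show "i \<in> ?E \<or> Suc i \<in> ?E"
      by cases (use i edge v in auto)
  qed (use sub in auto)
  show "is_vertex_cover_path n ?F"
    unfolding is_vertex_cover_path_def
  proof (intro conjI allI impI)
    fix i assume i: "1 \<le> i \<and> i < n"
    consider "i \<le> v" | "i = Suc v" | "Suc v < i"
      by linarith
    then show "i \<in> ?F \<or> Suc i \<in> ?F"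
      by cases (use i edge v in auto)
  qed (use sub in auto)
  have fin: "finite A" "finite B"
    using A B by (simp_all add: is_vertex_cover_path_finite)
  show "bin_weight ?E < bin_weight A"
    using fin v(2) by (intro bin_weight_less_if_max_diff[of _ _ "Suc v"]) auto
  show "mset_set ?E + mset_set ?F \<subseteq># mset_set A + mset_set B"
    using fin by (intro mset_set_add_subseteq) auto
qed

lemma exists_lighter_min_vertex_cover_path_pair:
  assumes A: "is_min_vertex_cover_path n A" and B: "is_vertex_cover_path n B" and "v \<in> B"
    and C: "is_vertex_cover_path n C" "C \<subseteq> insert v A" "bin_weight C < bin_weight A"
  shows "\<exists>E F. is_min_vertex_cover_path n E \<and> is_min_vertex_cover_path n F \<and>
    bin_weight E < bin_weight A \<and> mset_set E + mset_set F \<subseteq># mset_set A + mset_set B"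
proof -
  have "v \<in> B - A" "Suc v \<in> A" "Suc (Suc v) \<le> n \<Longrightarrow> Suc (Suc v) \<in> A"
    using lighter_vertex_cover_path_in_insert[OF A C] \<open>v \<in> B\<close> by auto
  then obtain E F where EF: "is_vertex_cover_path n E" "is_vertex_cover_path n F"
    "bin_weight E < bin_weight A" "mset_set E + mset_set F \<subseteq># mset_set A + mset_set B"
    using vertex_cover_path_swap[OF is_min_vertex_cover_path_imp_cover[OF A] B] by blast
  obtain E' F' where E': "E' \<subseteq> E" "is_min_vertex_cover_path n E'"
    and F': "F' \<subseteq> F" "is_min_vertex_cover_path n F'"
    using exists_min_vertex_cover_path_subset EF(1,2) by meson
  have fin: "finite E" "finite F"
    using EF(1,2) by (simp_all add: is_vertex_cover_path_finite)
  then have "mset_set E' + mset_set F' \<subseteq># mset_set E + mset_set F"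
    using E'(1) F'(1) by (intro subset_mset.add_mono subset_imp_msubset_mset_set)
  moreover have "bin_weight E' \<le> bin_weight E"
    using fin(1) E'(1) by (rule bin_weight_mono)
  ultimately show ?thesis
    using E'(2) F'(2) EF(3,4) by (meson le_less_trans subset_mset.order_trans)
qed

lemma nth_rooted_min_vertex_cover_path:
  assumes "2 \<le> n" "p < length (rooted n)"
  obtains C where "rooted n ! p = mset_set C" "is_min_vertex_cover_path n C"
  using nth_mem[OF assms(2)] set_rooted[OF assms(1)] unfolding cover_gens_def by auto

lemma min_vertex_cover_path_in_rooted:
  assumes "2 \<le> n" "is_min_vertex_cover_path n C"
  obtains p where "p < length (rooted n)" "rooted n ! p = mset_set C"
proof -
  have "mset_set C \<in> set (rooted n)"
    using assms set_rooted[OF assms(1)] unfolding cover_gens_def by blast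
  then show thesis
    using that by (auto simp: in_set_conv_nth)
qed

lemma rooted_exchange:
  assumes "2 \<le> n" "p < length (rooted n)" "q < length (rooted n)" "r < p"
    and "v \<in># rooted n ! q" "rooted n ! r \<subseteq># {#v#} + rooted n ! p"
  obtains a b where "a < p" "b < length (rooted n)"
    "rooted n ! a + rooted n ! b \<subseteq># rooted n ! p + rooted n ! q"
proof -
  obtain A where A: "rooted n ! p = mset_set A" "is_min_vertex_cover_path n A"
    by (rule nth_rooted_min_vertex_cover_path[of n p]) (use assms in auto)
  obtain B where B: "rooted n ! q = mset_set B" "is_min_vertex_cover_path n B"
    by (rule nth_rooted_min_vertex_cover_path[of n q]) (use assms in auto)
  obtain C where C: "rooted n ! r = mset_set C" "is_min_vertex_cover_path n C"
    by (rule nth_rooted_min_vertex_cover_path[of n r]) (use assms in auto)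
  have cover: "is_vertex_cover_path n B" "is_vertex_cover_path n C"
    using B(2) C(2) by (simp_all add: is_min_vertex_cover_path_imp_cover)
  have fin: "finite A" "finite B" "finite C"
    using A(2) B(2) C(2) is_min_vertex_cover_path_imp_cover is_vertex_cover_path_finite by blast+
  have "bin_weight C < bin_weight A"
    using nth_rooted_bin_weight_less_iff[of p n r] A(1) C(1) fin assms(2,4) by simp
  moreover have "C \<subseteq> insert v A" "v \<in> B"
    using set_mset_mono[OF assms(6)] assms(5) A(1) B(1) C(1) fin by auto
  ultimately obtain E F where E: "is_min_vertex_cover_path n E" "bin_weight E < bin_weight A"
    and F: "is_min_vertex_cover_path n F"
    and EF: "mset_set E + mset_set F \<subseteq># mset_set A + mset_set B"
    using exists_lighter_min_vertex_cover_path_pair[OF A(2) cover(1) _ cover(2)] by blast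
  obtain a where a: "a < length (rooted n)" "rooted n ! a = mset_set E"
    using min_vertex_cover_path_in_rooted[OF assms(1) E(1)] by blast
  obtain b where b: "b < length (rooted n)" "rooted n ! b = mset_set F"
    using min_vertex_cover_path_in_rooted[OF assms(1) F] by blast
  have "finite E"
    using E(1) is_min_vertex_cover_path_imp_cover is_vertex_cover_path_finite by blast
  then have "a < p"
    using nth_rooted_bin_weight_less_iff[of p n a] a A(1) E(2) fin(1) assms(2) by simp
  then show thesis
    using that b(1) EF a(2) b(2) A(1) B(1) by simp
qed

lemma lex_gt_expvec:
  assumes "0 < a" "0 < b" "a < i" "i \<le> j" "a \<le> k"
  shows "lex_gt (expvec k a b) (expvec k i j)"
proof -
  define c where "c = min a b"
  have c: "0 < c" "c < i" "c \<le> k"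
    using assms unfolding c_def by auto
  have nth: "expvec k x y ! p = (if Suc p = x then 1 else 0) + (if Suc p = y then 1 else 0)"
    if "p < k" for x y p
    using that unfolding expvec_def by (simp del: upt_Suc)
  have "take (c - 1) (expvec k i j) = take (c - 1) (expvec k a b)"
    using c assms by (intro nth_equalityI) (auto simp: nth expvec_def c_def simp del: upt_Suc)
  moreover have "expvec k i j ! (c - 1) < expvec k a b ! (c - 1)"
    using c assms by (auto simp: nth c_def)
  moreover have "c - 1 < min (length (expvec k i j)) (length (expvec k a b))"
    using c by (simp add: expvec_def)
  ultimately show ?thesis
    unfolding lex_gt_def lexord_take_index_conv by blast
qed

lemma not_is_max_expr:
  assumes "0 < a" "0 < b" "a < i" "i \<le> j" "b \<le> length (rooted n)" "j \<le> length (rooted n)"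
    and "rooted n ! (a - 1) + rooted n ! (b - 1) = rooted n ! (i - 1) + rooted n ! (j - 1)"
  shows "\<not> is_max_expr n i j"
  using assms lex_gt_expvec[of a b i j "length (rooted n)"]
  unfolding is_max_expr_def Let_def by force

lemma min_gens_subseteq_eq: "Q \<in> min_gens G \<Longrightarrow> P \<in> G \<Longrightarrow> P \<subseteq># Q \<Longrightarrow> P = Q"
  unfolding min_gens_def in_mideal_def by blast

theorem proposition4p2:
  fixes n i j :: nat
  assumes "n \<ge> 2"
    and "1 < i" and "i < j" and "j \<le> length (rooted n)"
    and "\<exists>v. 1 \<le> v \<and> v \<le> n \<and> v \<in># rooted n ! (j - 1) \<and>
           in_mideal {rooted n ! (l - 1) | l. 1 \<le> l \<and> l < i} ({#v#} + rooted n ! (i - 1))"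
  shows "rooted n ! (i - 1) + rooted n ! (j - 1) \<notin> min_gens (F2 (cover_gens n))
         \<or> \<not> is_max_expr n i j"
proof -
  let ?u = "\<lambda>l. rooted n ! (l - 1)"
  obtain v l where vl: "v \<in># ?u j" "1 \<le> l" "l < i" "?u l \<subseteq># {#v#} + ?u i"
    using assms(5) unfolding in_mideal_def by blast
  obtain a b where ab: "a < i - 1" "b < length (rooted n)"
    and sub: "rooted n ! a + rooted n ! b \<subseteq># ?u i + ?u j"
    by (rule rooted_exchange[of n "i - 1" "j - 1" "l - 1" v]) (use assms vl in auto)
  show ?thesis
  proof (cases "rooted n ! a + rooted n ! b = ?u i + ?u j")
    case True
    then have "\<not> is_max_expr n i j"
      using ab assms by (intro not_is_max_expr[of "Suc a" "Suc b"]) auto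
    then show ?thesis ..
  next
    case False
    have "a < length (rooted n)"
      using ab(1) assms(3,4) by linarith
    then have "rooted n ! a \<in> cover_gens n" "rooted n ! b \<in> cover_gens n"
      using ab(2) nth_mem set_rooted[OF assms(1)] by blast+
    then have "rooted n ! a + rooted n ! b \<in> F2 (cover_gens n)"
      unfolding F2_def by blast
    then show ?thesis
      using False sub min_gens_subseteq_eq by blast
  qed
qed

end
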